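(* Let $n$ be a positive integer, $\sigma\in(0,1]$ with $\sigma n$ an integer, and let $S\subseteq[n]$ with $|S|=\sigma n$. Let $\alpha>0$ be such that $k=\alpha/\sigma$ is a positive integer. Construct $(X_1,Z_1,\dots,Z_k)$ as follows: draw $Y_1,\dots,Y_k$ independently and uniformly from $[n]$; for each $i$ with $Y_i\notin S$ set $Z_i=Y_i$; for each $i$ with $Y_i\in S$ draw $\tilde W_i$ uniformly from $S$ (independently of everything else) and set $Z_i=\tilde W_i$; if there is at least one $i$ with $Y_i\in S$, let $X_1$ be chosen uniformly at random from the set of drawn values $\{\tilde W_i\}$, and otherwise draw $X_1$ uniformly from $S$ independently. Then: (a) $X_1$ is uniformly distributed on $S$; (b) each $Z_i$ is uniformly distributed on $[n]$; (c) $Z_1,\dots,Z_k$ are independent; (d) with probability $1-(1-\sigma)^{\alpha/\sigma}$, $X_1\in\{Z_1,\dots,Z_k\}$. *)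

theory Defs
  imports "HOL-Probability.Probability"
begin

(* Indices are 0..k-1 (the paper's 1..k); random functions
   are set to the default value 0 outside of the index range. Y and Wt are drawn i.i.d.
   (Wt i is only used when Y i lies in S); V is the independent fallback draw for X1. *)

definition drawn_indices :: "nat set \<Rightarrow> nat \<Rightarrow> (nat \<Rightarrow> nat) \<Rightarrow> nat set" where
  "drawn_indices S k Y = {i. i < k \<and> Y i \<in> S}"

definition Z_of :: "nat set \<Rightarrow> nat \<Rightarrow> (nat \<Rightarrow> nat) \<Rightarrow> (nat \<Rightarrow> nat) \<Rightarrow> (nat \<Rightarrow> nat)" where
  "Z_of S k Y Wt = (\<lambda>i. if i < k then (if Y i \<in> S then Wt i else Y i) else 0)"

definition construction :: "nat \<Rightarrow> nat set \<Rightarrow> nat \<Rightarrow> (nat \<times> (nat \<Rightarrow> nat)) pmf" where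
  "construction n S k = do {
       Y \<leftarrow> Pi_pmf {..<k} 0 (\<lambda>_. pmf_of_set {1..n});
       Wt \<leftarrow> Pi_pmf {..<k} 0 (\<lambda>_. pmf_of_set S);
       V \<leftarrow> pmf_of_set S;
       X \<leftarrow> (if drawn_indices S k Y = {} then return_pmf V
              else pmf_of_set (Wt ` drawn_indices S k Y));
       return_pmf (X, Z_of S k Y Wt) }"

end

theory Submission
  imports Defs
begin

(* Each Z_i is Y_i with a hit on S resampled uniformly inside S; resampling the S-part of a
   uniform point of {1..n} uniformly inside S leaves it uniform, and the Z_i stay independent
   because Z_i depends only on (Y_i, Wt_i). X_1 lives on S and its law is invariant under every
   permutation of S, which merely relabels the i.i.d. uniform draws Wt_i and V; so it is uniform
   on S. Finally X_1 is among the Z_i exactly when some Y_i hits S (otherwise X_1 = V lies in S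
   while every Z_i = Y_i lies outside), an event of probability 1 - (1 - |S|/n)^k. *)

definition resample_pmf :: "'a set \<Rightarrow> 'a set \<Rightarrow> 'a pmf" where
  "resample_pmf A S = do {
       y \<leftarrow> pmf_of_set A;
       w \<leftarrow> pmf_of_set S;
       return_pmf (if y \<in> S then w else y) }"

lemma resample_pmf_eq_pmf_of_set:
  assumes "finite A" and "S \<subseteq> A" and "S \<noteq> {}"
  shows "resample_pmf A S = pmf_of_set A"
proof (rule pmf_eqI)
  fix x
  have "finite S" and "A \<noteq> {}"
    using assms finite_subset by auto
  have resample_step: "pmf (pmf_of_set S \<bind> (\<lambda>w. return_pmf (if y \<in> S then w else y))) x
      = (if y \<in> S then indicator S x / card S else indicator {y} x)" for y
    using \<open>finite S\<close> assms(3) by (cases "y \<in> S") (simp_all add: bind_return_pmf' indicator_def)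
  have "(\<Sum>y\<in>A. if y \<in> S then indicator S x / card S else indicator {y} x)
      = (\<Sum>y\<in>S. indicator S x / card S) + (\<Sum>y\<in>A - S. indicator {y} x :: real)"
    using assms(1,2) \<open>finite S\<close> by (subst sum.subset_diff[of S A]) auto
  also have "\<dots> = indicator A x"
    using \<open>finite S\<close> assms by (auto simp: indicator_def)
  finally show "pmf (resample_pmf A S) x = pmf (pmf_of_set A) x"
    using \<open>A \<noteq> {}\<close> assms(1) by (simp add: resample_pmf_def pmf_bind_pmf_of_set resample_step)
qed

lemma permutation_invariant_pmf_eq_pmf_of_set:
  fixes p :: "'a pmf"
  assumes "finite S" and "S \<noteq> {}" and "set_pmf p \<subseteq> S"
    and invariant: "\<And>f. inj f \<Longrightarrow> f ` S = S \<Longrightarrow> map_pmf f p = p"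
  shows "p = pmf_of_set S"
proof -
  have pmf_const: "pmf p s = pmf p t" if "s \<in> S" and "t \<in> S" for s t
  proof -
    have "pmf p s = pmf (map_pmf (Transposition.transpose s t) p) (Transposition.transpose s t s)"
      by (rule pmf_map_inj'[symmetric]) (rule inj_transpose)
    also have "\<dots> = pmf p t"
      using that by (simp add: invariant inj_transpose)
    finally show ?thesis .
  qed
  obtain s where "s \<in> S"
    using assms(2) by blast
  have "1 = (\<Sum>x\<in>S. pmf p x)"
    using assms(1,3) by (simp add: sum_pmf_eq_1)
  also have "\<dots> = card S * pmf p s"
    using pmf_const[OF _ \<open>s \<in> S\<close>] by simp
  finally have "pmf p s = 1 / card S"
    using assms(1,2) by (simp add: field_simps)
  show ?thesis
  proof (rule pmf_eqI)
    fix x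
    show "pmf p x = pmf (pmf_of_set S) x"
    proof (cases "x \<in> S")
      case True
      then show ?thesis
        using assms(1,2) pmf_const[OF True \<open>s \<in> S\<close>] \<open>pmf p s = 1 / card S\<close> by simp
    next
      case False
      then show ?thesis
        using assms(1-3) by (auto simp: pmf_eq_0_set_pmf)
    qed
  qed
qed

lemma map_snd_construction:
  "map_pmf snd (construction n S k) = Pi_pmf {..<k} 0 (\<lambda>_. resample_pmf {1..n} S)"
proof -
  have "Pi_pmf {..<k} 0 (\<lambda>_. resample_pmf {1..n} S) =
    do {Y \<leftarrow> Pi_pmf {..<k} 0 (\<lambda>_. pmf_of_set {1..n});
        Pi_pmf {..<k} 0 (\<lambda>i. pmf_of_set S \<bind> (\<lambda>w. return_pmf (if Y i \<in> S then w else Y i)))}"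
    unfolding resample_pmf_def by (rule Pi_pmf_bind) simp
  also have "\<dots> = do {Y \<leftarrow> Pi_pmf {..<k} 0 (\<lambda>_. pmf_of_set {1..n});
        Wt \<leftarrow> Pi_pmf {..<k} 0 (\<lambda>_. pmf_of_set S);
        Pi_pmf {..<k} 0 (\<lambda>i. return_pmf (if Y i \<in> S then Wt i else Y i))}"
    by (subst Pi_pmf_bind[where d'=0]) simp_all
  also have "\<dots> = do {Y \<leftarrow> Pi_pmf {..<k} 0 (\<lambda>_. pmf_of_set {1..n});
        Wt \<leftarrow> Pi_pmf {..<k} 0 (\<lambda>_. pmf_of_set S);
        return_pmf (Z_of S k Y Wt)}"
    by (simp add: Z_of_def)
  finally show ?thesis
    unfolding construction_def by (simp add: map_bind_pmf map_return_pmf)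
qed

lemma map_component_construction:
  assumes "S \<subseteq> {1..n}" and "S \<noteq> {}" and "i < k"
  shows "map_pmf (\<lambda>(x, z). z i) (construction n S k) = pmf_of_set {1..n}"
proof -
  have "map_pmf (\<lambda>(x, z). z i) (construction n S k) = map_pmf (\<lambda>z. z i) (map_pmf snd (construction n S k))"
    by (simp add: pmf.map_comp o_def case_prod_unfold)
  also have "\<dots> = resample_pmf {1..n} S"
    using assms(3) by (simp add: map_snd_construction Pi_pmf_component)
  finally show ?thesis
    using assms(1,2) by (simp add: resample_pmf_eq_pmf_of_set)
qed

definition choose_X1 :: "nat set \<Rightarrow> nat \<Rightarrow> (nat \<Rightarrow> nat) \<Rightarrow> (nat \<Rightarrow> nat) \<Rightarrow> nat \<Rightarrow> nat pmf" where
  "choose_X1 S k Y Wt V = (if drawn_indices S k Y = {} then return_pmf V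
                          else pmf_of_set (Wt ` drawn_indices S k Y))"

lemma map_fst_construction:
  "map_pmf fst (construction n S k) =
    do {Y \<leftarrow> Pi_pmf {..<k} 0 (\<lambda>_. pmf_of_set {1..n});
        Wt \<leftarrow> Pi_pmf {..<k} 0 (\<lambda>_. pmf_of_set S);
        V \<leftarrow> pmf_of_set S;
        choose_X1 S k Y Wt V}"
  unfolding construction_def choose_X1_def
  by (simp add: map_bind_pmf map_return_pmf bind_return_pmf')

lemma finite_drawn_indices [simp]: "finite (drawn_indices S k Y)"
  unfolding drawn_indices_def by auto

lemma map_choose_X1:
  "inj f \<Longrightarrow> map_pmf f (choose_X1 S k Y Wt V) = choose_X1 S k Y (f \<circ> Wt) (f V)"
  unfolding choose_X1_def
  by (simp add: map_return_pmf map_pmf_of_set_inj[OF inj_on_subset] image_comp)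

lemma choose_X1_cong:
  assumes "\<And>i. i < k \<Longrightarrow> Wt i = Wt' i"
  shows "choose_X1 S k Y Wt V = choose_X1 S k Y Wt' V"
proof -
  have "Wt ` drawn_indices S k Y = Wt' ` drawn_indices S k Y"
    using assms by (intro image_cong) (auto simp: drawn_indices_def)
  then show ?thesis
    by (simp add: choose_X1_def)
qed

lemma map_fst_construction_permute:
  assumes "finite S" and "S \<noteq> {}" and "inj f" and "f ` S = S"
  shows "map_pmf f (map_pmf fst (construction n S k)) = map_pmf fst (construction n S k)"
proof -
  let ?PY = "Pi_pmf {..<k} 0 (\<lambda>_. pmf_of_set {1..n})"
  let ?PW = "\<lambda>d. Pi_pmf {..<k} d (\<lambda>_. pmf_of_set S)"
  have map_S: "map_pmf f (pmf_of_set S) = pmf_of_set S"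
    using assms by (simp add: map_pmf_of_set_inj inj_on_subset)
  have map_W: "map_pmf (\<lambda>h. f \<circ> h) (?PW 0) = ?PW (f 0)"
    using Pi_pmf_map[of "{..<k}" f 0 "f 0" "\<lambda>_. pmf_of_set S"] map_S by simp
  \<comment> \<open>f may move the default value 0 of the product, but choose_X1 ignores Wt outside {..<k}\<close>
  have default_W: "map_pmf (\<lambda>h i. if i \<in> {..<k} then h i else 0) (?PW (f 0)) = ?PW 0"
    by (rule Pi_pmf_default_swap) simp
  have "map_pmf f (map_pmf fst (construction n S k)) =
      do {Y \<leftarrow> ?PY; Wt \<leftarrow> map_pmf (\<lambda>h. f \<circ> h) (?PW 0); V \<leftarrow> map_pmf f (pmf_of_set S);
          choose_X1 S k Y Wt V}"
    unfolding map_fst_construction using assms(3)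
    by (simp add: map_bind_pmf map_choose_X1 bind_map_pmf)
  also have "\<dots> = do {Y \<leftarrow> ?PY; Wt \<leftarrow> ?PW (f 0); V \<leftarrow> pmf_of_set S; choose_X1 S k Y Wt V}"
    unfolding map_W map_S ..
  also have "\<dots> = do {Y \<leftarrow> ?PY; Wt \<leftarrow> map_pmf (\<lambda>h i. if i \<in> {..<k} then h i else 0) (?PW (f 0));
          V \<leftarrow> pmf_of_set S; choose_X1 S k Y Wt V}"
    unfolding bind_map_pmf by (intro bind_pmf_cong refl choose_X1_cong) simp
  also have "\<dots> = map_pmf fst (construction n S k)"
    unfolding default_W map_fst_construction ..
  finally show ?thesis .
qed

lemma set_pmf_fst_construction:
  assumes "finite S" and "S \<noteq> {}"
  shows "set_pmf (map_pmf fst (construction n S k)) \<subseteq> S"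
proof -
  have "set_pmf (choose_X1 S k Y Wt V) \<subseteq> S"
    if "Wt \<in> set_pmf (Pi_pmf {..<k} 0 (\<lambda>_. pmf_of_set S))" and "V \<in> S" for Y Wt V
  proof -
    have "Wt i \<in> S" if "i < k" for i
      using \<open>Wt \<in> _\<close> that assms by (auto simp: set_Pi_pmf PiE_dflt_def)
    then show ?thesis
      using \<open>V \<in> S\<close> unfolding choose_X1_def by (auto simp: drawn_indices_def)
  qed
  then show ?thesis
    using assms unfolding map_fst_construction by (auto simp: set_bind_pmf)
qed

lemma map_fst_construction_eq_pmf_of_set:
  assumes "finite S" and "S \<noteq> {}"
  shows "map_pmf fst (construction n S k) = pmf_of_set S"
  using assms set_pmf_fst_construction map_fst_construction_permute
  by (intro permutation_invariant_pmf_eq_pmf_of_set)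

lemma hit_event_construction:
  assumes "finite S" and "S \<noteq> {}"
  shows "map_pmf (\<lambda>(x, z). \<exists>i<k. z i = x) (construction n S k) =
    map_pmf (\<lambda>Y. drawn_indices S k Y \<noteq> {}) (Pi_pmf {..<k} 0 (\<lambda>_. pmf_of_set {1..n}))"
proof -
  have hit_iff_drawn: "map_pmf (\<lambda>x. \<exists>i<k. Z_of S k Y Wt i = x) (choose_X1 S k Y Wt V)
      = return_pmf (drawn_indices S k Y \<noteq> {})"
    if "V \<in> S" for Y Wt V
  proof (cases "drawn_indices S k Y = {}")
    case True
    then have "\<forall>i<k. Y i \<notin> S"
      by (auto simp: drawn_indices_def)
    then show ?thesis
      using True \<open>V \<in> S\<close> by (auto simp: choose_X1_def Z_of_def map_return_pmf)
  next
    case False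
    have "map_pmf (\<lambda>x. \<exists>i<k. Z_of S k Y Wt i = x) (choose_X1 S k Y Wt V)
        = map_pmf (\<lambda>_. True) (choose_X1 S k Y Wt V)"
    proof (rule map_pmf_cong[OF refl])
      fix x
      assume "x \<in> set_pmf (choose_X1 S k Y Wt V)"
      then obtain j where "j \<in> drawn_indices S k Y" and "x = Wt j"
        using False by (auto simp: choose_X1_def)
      then show "(\<exists>i<k. Z_of S k Y Wt i = x) = True"
        by (auto simp: drawn_indices_def Z_of_def)
    qed
    then show ?thesis
      using False by simp
  qed
  have "map_pmf (\<lambda>(x, z). \<exists>i<k. z i = x) (construction n S k) =
      do {Y \<leftarrow> Pi_pmf {..<k} 0 (\<lambda>_. pmf_of_set {1..n});
          Wt \<leftarrow> Pi_pmf {..<k} 0 (\<lambda>_. pmf_of_set S);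
          V \<leftarrow> pmf_of_set S;
          map_pmf (\<lambda>x. \<exists>i<k. Z_of S k Y Wt i = x) (choose_X1 S k Y Wt V)}"
    unfolding construction_def choose_X1_def map_pmf_def by (simp add: bind_assoc_pmf bind_return_pmf)
  also have "\<dots> = do {Y \<leftarrow> Pi_pmf {..<k} 0 (\<lambda>_. pmf_of_set {1..n});
          Wt \<leftarrow> Pi_pmf {..<k} 0 (\<lambda>_. pmf_of_set S);
          V \<leftarrow> pmf_of_set S;
          return_pmf (drawn_indices S k Y \<noteq> {})}"
    using assms by (intro bind_pmf_cong refl hit_iff_drawn) auto
  also have "\<dots> = map_pmf (\<lambda>Y. drawn_indices S k Y \<noteq> {}) (Pi_pmf {..<k} 0 (\<lambda>_. pmf_of_set {1..n}))"
    by (simp add: map_pmf_def)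
  finally show ?thesis .
qed

lemma prob_hit_construction:
  assumes "S \<subseteq> {1..n}" and "S \<noteq> {}"
  shows "measure_pmf.prob (construction n S k) {(x, z). \<exists>i<k. z i = x}
    = 1 - (1 - card S / n) ^ k"
proof -
  let ?PY = "Pi_pmf {..<k} 0 (\<lambda>_. pmf_of_set {1..n})"
  have "finite S" and "n > 0"
    using assms finite_subset by fastforce+
  have "measure_pmf.prob (construction n S k) {(x, z). \<exists>i<k. z i = x}
      = measure_pmf.prob (map_pmf (\<lambda>(x, z). \<exists>i<k. z i = x) (construction n S k)) {True}"
    by (simp add: vimage_def case_prod_unfold)
  also have "\<dots> = measure_pmf.prob ?PY {Y. drawn_indices S k Y \<noteq> {}}"
    using \<open>finite S\<close> assms(2) by (simp add: hit_event_construction vimage_def)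
  also have "{Y. drawn_indices S k Y \<noteq> {}} = UNIV - Pi {..<k} (\<lambda>_. - S)"
    by (auto simp: drawn_indices_def)
  also have "measure_pmf.prob ?PY (UNIV - Pi {..<k} (\<lambda>_. - S))
      = 1 - (\<Prod>i<k. measure_pmf.prob (pmf_of_set {1..n}) (- S))"
    using measure_pmf.prob_compl[of "Pi {..<k} (\<lambda>_. - S)" ?PY] by (simp add: measure_Pi_pmf_Pi)
  also have "measure_pmf.prob (pmf_of_set {1..n}) (- S) = 1 - card S / n"
  proof -
    have "card ({1..n} \<inter> - S) = n - card S"
      using assms(1) \<open>finite S\<close> by (simp add: Diff_eq[symmetric] card_Diff_subset)
    moreover have "card S \<le> n"
      using card_mono[OF _ assms(1)] by simp
    ultimately show ?thesis
      using \<open>n > 0\<close> by (simp add: measure_pmf_of_set of_nat_diff field_simps)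
  qed
  finally show ?thesis
    by simp
qed

theorem mainTheorem2:
  fixes n k :: nat and \<sigma> \<alpha> :: real and S :: "nat set"
  assumes "n > 0"
    and "0 < \<sigma>" and "\<sigma> \<le> 1"
    and "\<sigma> * real n \<in> \<int>"
    and "S \<subseteq> {1..n}"
    and "real (card S) = \<sigma> * real n"
    and "\<alpha> > 0"
    and "k > 0" and "real k = \<alpha> / \<sigma>"
  shows "(map_pmf fst (construction n S k) = pmf_of_set S)
    \<and> (\<forall>i<k. map_pmf (\<lambda>(x, z). z i) (construction n S k) = pmf_of_set {1..n})
    \<and> (map_pmf snd (construction n S k) =
           Pi_pmf {..<k} 0 (\<lambda>i. map_pmf (\<lambda>(x, z). z i) (construction n S k)))
    \<and> (measure_pmf.prob (construction n S k) {(x, z). \<exists>i<k. z i = x}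
           = 1 - (1 - \<sigma>) powr (\<alpha> / \<sigma>))"
proof -
  have "finite S"
    using assms(5) finite_subset by blast
  have "S \<noteq> {}"
    using assms(1,2,6) by auto
  have "card S / n = \<sigma>"
    using assms(1,6) by simp
  have "(1 - \<sigma>) ^ k = (1 - \<sigma>) powr (\<alpha> / \<sigma>)"
    using assms(3,8,9) by (cases "\<sigma> = 1") (simp_all flip: powr_realpow)
  moreover have "map_pmf snd (construction n S k) =
      Pi_pmf {..<k} 0 (\<lambda>i. map_pmf (\<lambda>(x, z). z i) (construction n S k))"
    unfolding map_snd_construction resample_pmf_eq_pmf_of_set[OF finite_atLeastAtMost assms(5) \<open>S \<noteq> {}\<close>]
    using assms(5) \<open>S \<noteq> {}\<close> by (intro Pi_pmf_cong) (simp_all add: map_component_construction)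
  ultimately show ?thesis
    using \<open>finite S\<close> \<open>S \<noteq> {}\<close> assms(5) \<open>card S / n = \<sigma>\<close>
    by (simp add: map_fst_construction_eq_pmf_of_set map_component_construction prob_hit_construction)
qed

end
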